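(* For every integer $d\ge 2$, $\mathcal Q_d$ is an open subset of $\mathcal C_d$ (and hence of $\mathcal A_d$).
   Context: A polynomial knot is a map $\phi:\mathbb R\to\mathbb R^3$ with real polynomial components which is a smooth embedding ($\phi$ injective and $\phi'(t)\ne0$ for all $t$). For $d\ge2$, $\mathcal A_d$ is the set of polynomial maps $t\mapsto(f(t),g(t),h(t))$ with $\deg f\le d-2$, $\deg g\le d-1$, $\deg h\le d$, topologized via the bijection with Euclidean $\mathbb R^{3d}$ sending $(f,g,h)$ to its coefficient vector $(a_0,\dots,a_{d-2},b_0,\dots,b_{d-1},c_0,\dots,c_d)$, where $f=\sum a_it^i$, $g=\sum b_it^i$, $h=\sum c_it^i$. $\mathcal C_d\subseteq\mathcal A_d$ is the subspace of maps with $\deg f=d-2$, $\deg g=d-1$, $\deg h=d$ exactly, and $\mathcal Q_d$ is the set of polynomial knots in $\mathcal C_d$. *)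

theory Defs
  imports "HOL-Analysis.Analysis"
begin

text \<open>The type carries the product topology (pointwise convergence of coefficients); on the
  set A d, where all but 3d coefficients vanish, this is the Euclidean topology of R^(3d).\<close>
type_synonym coeffs = "(nat \<Rightarrow> real) \<times> (nat \<Rightarrow> real) \<times> (nat \<Rightarrow> real)"

definition A_set :: "nat \<Rightarrow> coeffs set" where
  "A_set d = {(a, b, c). (\<forall>i>d - 2. a i = 0) \<and> (\<forall>i>d - 1. b i = 0) \<and> (\<forall>i>d. c i = 0)}"

definition C_set :: "nat \<Rightarrow> coeffs set" where
  "C_set d = {(a, b, c). (a, b, c) \<in> A_set d \<and> a (d - 2) \<noteq> 0 \<and> b (d - 1) \<noteq> 0 \<and> c d \<noteq> 0}"

definition polymap :: "nat \<Rightarrow> coeffs \<Rightarrow> real \<Rightarrow> real \<times> real \<times> real" where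
  "polymap d p t = (case p of (a, b, c) \<Rightarrow>
     ((\<Sum>i\<le>d. a i * t ^ i), (\<Sum>i\<le>d. b i * t ^ i), (\<Sum>i\<le>d. c i * t ^ i)))"

definition poly_knot :: "(real \<Rightarrow> real \<times> real \<times> real) \<Rightarrow> bool" where
  "poly_knot \<phi> \<longleftrightarrow> inj \<phi> \<and> (\<forall>t. \<phi> differentiable (at t) \<and> vector_derivative \<phi> (at t) \<noteq> 0)"

definition Q_set :: "nat \<Rightarrow> coeffs set" where
  "Q_set d = {p \<in> C_set d. poly_knot (polymap d p)}"

end

theory Submission
  imports Defs
begin

text \<open>
  For a polynomial map \<open>\<phi>\<close>, the divided difference \<open>(\<phi> s - \<phi> t) / (s - t)\<close>, extended by \<open>\<phi>' t\<close>
  on the diagonal, is a polynomial secant map in \<open>(s, t)\<close>, linear in the coefficients of \<open>\<phi>\<close>;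
  \<open>\<phi>\<close> is a polynomial knot iff its secant map never vanishes. One of the degrees \<open>d - 1\<close>, \<open>d\<close>
  is odd, and for odd \<open>n\<close> the divided difference of \<open>t ^ n\<close> is at least
  \<open>max \<bar>s\<bar> \<bar>t\<bar> ^ (n - 1) / 2\<close>; hence that component of the secant map is nonzero outside a
  large square, uniformly for all nearby coefficients. On the compact square the secant map of
  a knot is bounded away from zero, and it moves uniformly little with the coefficients.
\<close>

definition pow_diff_quot :: "nat \<Rightarrow> real \<Rightarrow> real \<Rightarrow> real" where
  "pow_diff_quot n s t = (\<Sum>j<n. t ^ (n - Suc j) * s ^ j)"

lemma power_diff_eq_pow_diff_quot: "s ^ n - t ^ n = (s - t) * pow_diff_quot n s t"
  unfolding pow_diff_quot_def by (rule power_diff_sumr2)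

lemma pow_diff_quot_diag: "pow_diff_quot n t t = of_nat n * t ^ (n - 1)"
proof -
  have "t ^ (n - Suc j) * t ^ j = t ^ (n - 1)" if "j < n" for j
    using that by (simp flip: power_add)
  then show ?thesis unfolding pow_diff_quot_def by simp
qed

lemma abs_pow_diff_quot_le: "\<bar>pow_diff_quot n s t\<bar> \<le> of_nat n * max \<bar>s\<bar> \<bar>t\<bar> ^ (n - 1)"
proof -
  let ?M = "max \<bar>s\<bar> \<bar>t\<bar>"
  have "\<bar>t ^ (n - Suc j) * s ^ j\<bar> \<le> ?M ^ (n - 1)" if "j < n" for j
  proof -
    have "\<bar>t ^ (n - Suc j) * s ^ j\<bar> = \<bar>t\<bar> ^ (n - Suc j) * \<bar>s\<bar> ^ j"
      by (simp add: abs_mult power_abs)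
    also have "\<dots> \<le> ?M ^ (n - Suc j) * ?M ^ j"
      by (intro mult_mono power_mono) auto
    also have "\<dots> = ?M ^ (n - 1)"
      using that by (simp flip: power_add)
    finally show ?thesis .
  qed
  then have "(\<Sum>j<n. \<bar>t ^ (n - Suc j) * s ^ j\<bar>) \<le> of_nat n * ?M ^ (n - 1)"
    using sum_mono[of "{..<n}" _ "\<lambda>_. ?M ^ (n - 1)"] by simp
  with sum_abs show ?thesis
    unfolding pow_diff_quot_def by (rule order_trans)
qed

lemma pow_diff_quot_nonneg_odd:
  assumes "odd n"
  shows "0 \<le> pow_diff_quot n s t"
proof (cases s t rule: linorder_cases)
  case less
  then have "0 \<le> t ^ n - s ^ n" using power_mono_odd[OF assms, of s t] by simp
  moreover have "t ^ n - s ^ n = (t - s) * pow_diff_quot n s t"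
    using power_diff_eq_pow_diff_quot[of s n t] by (simp add: algebra_simps)
  ultimately show ?thesis using less by (simp add: zero_le_mult_iff)
next
  case greater
  then have "0 \<le> s ^ n - t ^ n" using power_mono_odd[OF assms, of t s] by simp
  then show ?thesis using greater by (simp add: power_diff_eq_pow_diff_quot zero_le_mult_iff)
next
  case equal
  then show ?thesis using assms by (simp add: pow_diff_quot_diag zero_le_power_eq)
qed

lemma pow_diff_quot_minus: "pow_diff_quot n (- s) (- t) = (- 1) ^ (n - 1) * pow_diff_quot n s t"
proof -
  have "(- t) ^ (n - Suc j) * (- s) ^ j = (- 1) ^ (n - 1) * (t ^ (n - Suc j) * s ^ j)" if "j < n" for j
  proof -
    have "(- t) ^ (n - Suc j) * (- s) ^ j = ((- 1) ^ (n - Suc j) * (- 1) ^ j) * (t ^ (n - Suc j) * s ^ j)"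
      by (simp only: power_minus[of t] power_minus[of s] mult_ac)
    also have "(- 1) ^ (n - Suc j) * (- 1) ^ j = ((- 1) ^ (n - 1) :: real)"
      using that by (simp flip: power_add)
    finally show ?thesis .
  qed
  then show ?thesis unfolding pow_diff_quot_def by (simp add: sum_distrib_left)
qed

lemma pow_diff_quot_ge_nonneg:
  assumes "0 < n" "0 \<le> s" "0 \<le> t"
  shows "max s t ^ (n - 1) \<le> pow_diff_quot n s t"
proof -
  have terms: "0 \<le> t ^ (n - Suc j) * s ^ j" for j
    using assms by simp
  have "t ^ (n - Suc 0) * s ^ 0 \<le> pow_diff_quot n s t" "t ^ (n - Suc (n - 1)) * s ^ (n - 1) \<le> pow_diff_quot n s t"
    unfolding pow_diff_quot_def using assms(1) by (intro member_le_sum terms; simp)+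
  then show ?thesis using assms(1) by (simp add: max_def)
qed

lemma pow_diff_quot_odd_ge:
  assumes "odd n"
  shows "max \<bar>s\<bar> \<bar>t\<bar> ^ (n - 1) / 2 \<le> pow_diff_quot n s t"
proof -
  let ?M = "max \<bar>s\<bar> \<bar>t\<bar>"
  have n: "0 < n" using assms by (rule odd_pos)
  have "(0 \<le> s \<and> 0 \<le> t) \<or> (s \<le> 0 \<and> t \<le> 0) \<or> s * t < 0"
    by (auto simp: mult_less_0_iff)
  then consider "0 \<le> s" "0 \<le> t" | "s \<le> 0" "t \<le> 0" | "s * t < 0"
    by blast
  then have "?M ^ (n - 1) \<le> 2 * pow_diff_quot n s t"
  proof cases
    case 1
    then have "?M ^ (n - 1) \<le> pow_diff_quot n s t"
      using pow_diff_quot_ge_nonneg[OF n 1] by simp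
    then show ?thesis using pow_diff_quot_nonneg_odd[OF assms, of s t] by linarith
  next
    case 2
    then have "?M ^ (n - 1) \<le> pow_diff_quot n (- s) (- t)"
      using pow_diff_quot_ge_nonneg[OF n, of "- s" "- t"] by simp
    then show ?thesis using pow_diff_quot_nonneg_odd[OF assms, of s t] assms
      by (simp add: pow_diff_quot_minus)
  next
    case 3
    then have "s \<noteq> 0" by auto
    then have "0 < ?M" by (simp add: less_max_iff_disj)
    have opposite: "\<bar>x - y\<bar> = \<bar>x\<bar> + \<bar>y\<bar>" if "x * y < 0" for x y :: real
      using that by (auto simp: mult_less_0_iff)
    have Q: "0 \<le> pow_diff_quot n s t" using assms by (rule pow_diff_quot_nonneg_odd)
    have "\<bar>s - t\<bar> * pow_diff_quot n s t = \<bar>s ^ n - t ^ n\<bar>"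
      using Q by (simp add: power_diff_eq_pow_diff_quot abs_mult)
    moreover have "s ^ n * t ^ n < 0"
      using 3 assms by (simp flip: power_mult_distrib)
    then have "\<bar>s ^ n - t ^ n\<bar> = \<bar>s\<bar> ^ n + \<bar>t\<bar> ^ n"
      using opposite by (simp add: power_abs)
    moreover have "\<bar>s - t\<bar> = \<bar>s\<bar> + \<bar>t\<bar>"
      using 3 opposite by simp
    ultimately have "?M ^ n \<le> (\<bar>s\<bar> + \<bar>t\<bar>) * pow_diff_quot n s t"
      by (simp add: max_def)
    also have "\<dots> \<le> (2 * ?M) * pow_diff_quot n s t"
      using Q by (intro mult_right_mono) auto
    finally have "?M * ?M ^ (n - 1) \<le> ?M * (2 * pow_diff_quot n s t)"
      using n by (simp add: power_eq_if)
    then show ?thesis using \<open>0 < ?M\<close> by simp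
  qed
  then show ?thesis by simp
qed

definition poly_diff_quot :: "nat \<Rightarrow> (nat \<Rightarrow> real) \<Rightarrow> real \<Rightarrow> real \<Rightarrow> real" where
  "poly_diff_quot N e s t = (\<Sum>i\<le>N. e i * pow_diff_quot i s t)"

definition secant :: "nat \<Rightarrow> coeffs \<Rightarrow> real \<Rightarrow> real \<Rightarrow> real \<times> real \<times> real" where
  "secant d p s t = (case p of (a, b, c) \<Rightarrow>
     (poly_diff_quot d a s t, poly_diff_quot d b s t, poly_diff_quot d c s t))"

lemma poly_sum_diff_eq:
  "(\<Sum>i\<le>N. e i * s ^ i) - (\<Sum>i\<le>N. e i * t ^ i) = (s - t) * poly_diff_quot N e s t"
proof -
  have "(\<Sum>i\<le>N. e i * s ^ i) - (\<Sum>i\<le>N. e i * t ^ i) = (\<Sum>i\<le>N. e i * (s ^ i - t ^ i))"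
    by (simp add: sum_subtractf right_diff_distrib)
  also have "\<dots> = (s - t) * poly_diff_quot N e s t"
    by (simp add: poly_diff_quot_def power_diff_eq_pow_diff_quot sum_distrib_left mult_ac)
  finally show ?thesis .
qed

lemma has_real_derivative_poly_sum:
  "((\<lambda>t. \<Sum>i\<le>N. e i * t ^ i) has_real_derivative poly_diff_quot N e t t) (at t)"
proof -
  have "((\<lambda>t. \<Sum>i\<le>N. e i * t ^ i) has_real_derivative (\<Sum>i\<le>N. e i * (of_nat i * t ^ (i - 1)))) (at t)"
    by (intro derivative_eq_intros) auto
  then show ?thesis unfolding poly_diff_quot_def pow_diff_quot_diag .
qed

lemma polymap_diff_eq: "polymap d p s - polymap d p t = (s - t) *\<^sub>R secant d p s t"
  by (cases p) (simp add: polymap_def secant_def poly_sum_diff_eq)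

lemma polymap_has_vector_derivative:
  "(polymap d p has_vector_derivative secant d p t t) (at t)"
proof (cases p)
  case (fields a b c)
  then show ?thesis
    unfolding polymap_def secant_def
    by (auto intro!: has_vector_derivative_Pair
        simp flip: has_real_derivative_iff_has_vector_derivative
        simp: has_real_derivative_poly_sum)
qed

lemma poly_knot_polymap_iff: "poly_knot (polymap d p) \<longleftrightarrow> (\<forall>s t. secant d p s t \<noteq> 0)"
proof
  assume knot: "poly_knot (polymap d p)"
  show "\<forall>s t. secant d p s t \<noteq> 0"
  proof (intro allI)
    fix s t
    show "secant d p s t \<noteq> 0"
    proof (cases "s = t")
      case True
      then show ?thesis
        using knot vector_derivative_at[OF polymap_has_vector_derivative] unfolding poly_knot_def by metis
    next
      case False
      then show ?thesis
        using knot polymap_diff_eq[of d p s t] unfolding poly_knot_def inj_def by force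
    qed
  qed
next
  assume nonzero: "\<forall>s t. secant d p s t \<noteq> 0"
  have "inj (polymap d p)"
  proof (rule injI)
    fix s t
    assume "polymap d p s = polymap d p t"
    then have "(s - t) *\<^sub>R secant d p s t = 0" by (simp flip: polymap_diff_eq)
    with nonzero show "s = t" by simp
  qed
  moreover have "polymap d p differentiable (at t)" for t
    using polymap_has_vector_derivative differentiableI_vector by blast
  ultimately show "poly_knot (polymap d p)"
    unfolding poly_knot_def using nonzero vector_derivative_at[OF polymap_has_vector_derivative] by metis
qed

lemma poly_diff_quot_split:
  assumes "n \<le> N" "\<forall>i>n. e i = 0"
  shows "poly_diff_quot N e s t = e n * pow_diff_quot n s t + (\<Sum>i<n. e i * pow_diff_quot i s t)"
proof -
  have "poly_diff_quot N e s t = (\<Sum>i\<le>n. e i * pow_diff_quot i s t)"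
    unfolding poly_diff_quot_def using assms by (intro sum.mono_neutral_right) auto
  then show ?thesis by (simp add: lessThan_Suc_atMost[symmetric])
qed

lemma abs_sum_pow_diff_quot_below_le:
  assumes "1 \<le> max \<bar>s\<bar> \<bar>t\<bar>"
  shows "\<bar>\<Sum>i<n. e i * pow_diff_quot i s t\<bar> \<le> (\<Sum>i<n. \<bar>e i\<bar> * of_nat i) * max \<bar>s\<bar> \<bar>t\<bar> ^ (n - 2)"
proof -
  let ?M = "max \<bar>s\<bar> \<bar>t\<bar>"
  have bound: "\<bar>e i * pow_diff_quot i s t\<bar> \<le> \<bar>e i\<bar> * of_nat i * ?M ^ (n - 2)" if "i < n" for i
  proof -
    have "\<bar>e i * pow_diff_quot i s t\<bar> \<le> \<bar>e i\<bar> * (of_nat i * ?M ^ (i - 1))"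
      unfolding abs_mult by (intro mult_left_mono abs_pow_diff_quot_le) auto
    also have "\<dots> \<le> \<bar>e i\<bar> * (of_nat i * ?M ^ (n - 2))"
      using assms that by (intro mult_left_mono power_increasing) auto
    finally show ?thesis by (simp add: mult_ac)
  qed
  have "\<bar>\<Sum>i<n. e i * pow_diff_quot i s t\<bar> \<le> (\<Sum>i<n. \<bar>e i * pow_diff_quot i s t\<bar>)"
    by (rule sum_abs)
  also have "\<dots> \<le> (\<Sum>i<n. \<bar>e i\<bar> * of_nat i * ?M ^ (n - 2))"
    using bound by (intro sum_mono) auto
  finally show ?thesis by (simp add: sum_distrib_right)
qed

lemma poly_diff_quot_nonzero_if_large:
  assumes "odd n" "n \<le> N" "\<forall>i>n. e i = 0" "0 < L" "L \<le> \<bar>e n\<bar>"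
    and "(\<Sum>i<n. \<bar>e i\<bar> * of_nat i) \<le> B"
    and "1 \<le> max \<bar>s\<bar> \<bar>t\<bar>" "2 * B < max \<bar>s\<bar> \<bar>t\<bar> * L"
  shows "poly_diff_quot N e s t \<noteq> 0"
proof -
  let ?M = "max \<bar>s\<bar> \<bar>t\<bar>"
  have "L * (?M ^ (n - 1) / 2) \<le> \<bar>e n\<bar> * pow_diff_quot n s t"
    using assms(4,5) pow_diff_quot_odd_ge[OF assms(1)] by (intro mult_mono) auto
  then have leading: "L * ?M ^ (n - 1) / 2 \<le> \<bar>e n * pow_diff_quot n s t\<bar>"
    using pow_diff_quot_nonneg_odd[OF assms(1)] by (simp add: abs_mult)
  have "\<bar>\<Sum>i<n. e i * pow_diff_quot i s t\<bar> < L * ?M ^ (n - 1) / 2"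
  proof (cases "n = 1")
    case True
    then show ?thesis using assms(4) by (simp add: pow_diff_quot_def)
  next
    case False
    with odd_pos[OF assms(1)] have "n - 1 = Suc (n - 2)" by linarith
    then have split_power: "?M ^ (n - 1) = ?M * ?M ^ (n - 2)" by simp
    have "\<bar>\<Sum>i<n. e i * pow_diff_quot i s t\<bar> \<le> (\<Sum>i<n. \<bar>e i\<bar> * of_nat i) * ?M ^ (n - 2)"
      using assms(7) by (rule abs_sum_pow_diff_quot_below_le)
    also have "\<dots> \<le> B * ?M ^ (n - 2)"
      using assms(6) by (intro mult_right_mono) auto
    also have "\<dots> < (?M * L / 2) * ?M ^ (n - 2)"
      using assms(7,8) by (intro mult_strict_right_mono) auto
    also have "\<dots> = L * ?M ^ (n - 1) / 2"
      unfolding split_power by (simp add: mult_ac)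
    finally show ?thesis .
  qed
  with leading have "\<bar>\<Sum>i<n. e i * pow_diff_quot i s t\<bar> < \<bar>e n * pow_diff_quot n s t\<bar>"
    by linarith
  then show ?thesis
    using poly_diff_quot_split[OF assms(2,3), of s t] by (auto simp: add_eq_0_iff2)
qed

lemma poly_diff_quot_nonzero_far:
  assumes "odd n" "n \<le> N" "e n \<noteq> 0"
  obtains \<eta> R where "0 < \<eta>"
    "\<And>e' s t. \<forall>i>n. e' i = 0 \<Longrightarrow> \<forall>i\<le>n. \<bar>e' i - e i\<bar> < \<eta> \<Longrightarrow> R < max \<bar>s\<bar> \<bar>t\<bar>
       \<Longrightarrow> poly_diff_quot N e' s t \<noteq> 0"
proof
  define B where "B = (\<Sum>i<n. (\<bar>e i\<bar> + 1) * of_nat i)"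
  have en: "0 < \<bar>e n\<bar>" using assms(3) by simp
  show "0 < min 1 (\<bar>e n\<bar> / 2)" using en by simp
  fix e' :: "nat \<Rightarrow> real" and s t
  assume zero: "\<forall>i>n. e' i = 0" and close: "\<forall>i\<le>n. \<bar>e' i - e i\<bar> < min 1 (\<bar>e n\<bar> / 2)"
    and large: "max 1 (4 * B / \<bar>e n\<bar>) < max \<bar>s\<bar> \<bar>t\<bar>"
  have "\<bar>e' n - e n\<bar> < \<bar>e n\<bar> / 2" using close by simp
  then have "\<bar>e n\<bar> / 2 \<le> \<bar>e' n\<bar>" by linarith
  moreover have "(\<Sum>i<n. \<bar>e' i\<bar> * of_nat i) \<le> B"
  proof -
    have "\<bar>e' i\<bar> \<le> \<bar>e i\<bar> + 1" if "i < n" for i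
    proof -
      have "\<bar>e' i - e i\<bar> < 1" using close that by simp
      then show ?thesis by linarith
    qed
    then show ?thesis
      unfolding B_def by (intro sum_mono mult_right_mono) auto
  qed
  moreover have "2 * B < max \<bar>s\<bar> \<bar>t\<bar> * (\<bar>e n\<bar> / 2)"
    using large en by (simp add: pos_divide_less_eq)
  moreover have "1 \<le> max \<bar>s\<bar> \<bar>t\<bar>" using large by linarith
  ultimately show "poly_diff_quot N e' s t \<noteq> 0"
    using en by (intro poly_diff_quot_nonzero_if_large[OF assms(1,2) zero, of "\<bar>e n\<bar> / 2" B]) auto
qed

definition coeff_box :: "nat \<Rightarrow> coeffs \<Rightarrow> real \<Rightarrow> coeffs set" where
  "coeff_box d p \<delta> = (case p of (a, b, c) \<Rightarrow>
     {(a', b', c'). \<forall>i\<le>d. \<bar>a' i - a i\<bar> < \<delta> \<and> \<bar>b' i - b i\<bar> < \<delta> \<and> \<bar>c' i - c i\<bar> < \<delta>})"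

lemma mem_coeff_box [simp]:
  "(a', b', c') \<in> coeff_box d (a, b, c) \<delta> \<longleftrightarrow>
     (\<forall>i\<le>d. \<bar>a' i - a i\<bar> < \<delta> \<and> \<bar>b' i - b i\<bar> < \<delta> \<and> \<bar>c' i - c i\<bar> < \<delta>)"
  by (simp add: coeff_box_def)

lemma coeff_box_mono: "\<delta> \<le> \<delta>' \<Longrightarrow> coeff_box d p \<delta> \<subseteq> coeff_box d p \<delta>'"
  by (cases p) (fastforce simp: coeff_box_def)

lemma center_mem_coeff_box: "0 < \<delta> \<Longrightarrow> p \<in> coeff_box d p \<delta>"
  by (cases p) simp

lemma open_coeff_box: "open (coeff_box d p \<delta>)"
proof -
  have coord: "continuous_on UNIV (\<lambda>q. f q i)" if "continuous_on UNIV f" for f :: "coeffs \<Rightarrow> nat \<Rightarrow> real" and i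
    using continuous_on_compose2[OF continuous_on_product_coordinates that] by simp
  obtain a b c where p: "p = (a, b, c)" by (cases p)
  have box_eq: "coeff_box d p \<delta> = (\<Inter>i\<in>{..d}. {q. \<bar>fst q i - a i\<bar> < \<delta>} \<inter> {q. \<bar>fst (snd q) i - b i\<bar> < \<delta>}
      \<inter> {q. \<bar>snd (snd q) i - c i\<bar> < \<delta>})"
    by (auto simp: p coeff_box_def)
  show ?thesis
    unfolding box_eq by (intro open_INT finite_atMost ballI open_Int open_Collect_less continuous_intros coord)
qed

lemma abs_poly_diff_quot_diff_le:
  assumes "\<forall>i\<le>N. \<bar>e' i - e i\<bar> \<le> \<delta>" "max \<bar>s\<bar> \<bar>t\<bar> \<le> R"
  shows "\<bar>poly_diff_quot N e' s t - poly_diff_quot N e s t\<bar> \<le> \<delta> * (\<Sum>i\<le>N. of_nat i * R ^ (i - 1))"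
proof -
  have bound: "\<bar>(e' i - e i) * pow_diff_quot i s t\<bar> \<le> \<delta> * (of_nat i * R ^ (i - 1))" if "i \<le> N" for i
  proof -
    have "\<bar>pow_diff_quot i s t\<bar> \<le> of_nat i * max \<bar>s\<bar> \<bar>t\<bar> ^ (i - 1)"
      by (rule abs_pow_diff_quot_le)
    also have "\<dots> \<le> of_nat i * R ^ (i - 1)"
      using assms(2) by (intro mult_left_mono power_mono) auto
    finally show ?thesis
      unfolding abs_mult using assms(1) that by (intro mult_mono) auto
  qed
  have "\<bar>poly_diff_quot N e' s t - poly_diff_quot N e s t\<bar> = \<bar>\<Sum>i\<le>N. (e' i - e i) * pow_diff_quot i s t\<bar>"
    unfolding poly_diff_quot_def by (simp add: sum_subtractf left_diff_distrib)
  also have "\<dots> \<le> (\<Sum>i\<le>N. \<bar>(e' i - e i) * pow_diff_quot i s t\<bar>)"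
    by (rule sum_abs)
  also have "\<dots> \<le> (\<Sum>i\<le>N. \<delta> * (of_nat i * R ^ (i - 1)))"
    using bound by (intro sum_mono) auto
  finally show ?thesis by (simp add: sum_distrib_left)
qed

lemma norm_secant_diff_le:
  assumes "q \<in> coeff_box d p \<delta>" "max \<bar>s\<bar> \<bar>t\<bar> \<le> R"
  shows "norm (secant d q s t - secant d p s t) \<le> 3 * \<delta> * (\<Sum>i\<le>d. of_nat i * R ^ (i - 1))"
proof -
  obtain a b c a' b' c' where p: "p = (a, b, c)" and q: "q = (a', b', c')" by (cases p, cases q)
  let ?W = "\<Sum>i\<le>d. of_nat i * R ^ (i - 1)"
  have diff_le: "\<bar>poly_diff_quot d e' s t - poly_diff_quot d e s t\<bar> \<le> \<delta> * ?W"
    if "\<forall>i\<le>d. \<bar>e' i - e i\<bar> < \<delta>" for e' e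
    using that by (intro abs_poly_diff_quot_diff_le assms(2)) (simp add: less_imp_le)
  let ?da = "poly_diff_quot d a' s t - poly_diff_quot d a s t"
  let ?db = "poly_diff_quot d b' s t - poly_diff_quot d b s t"
  let ?dc = "poly_diff_quot d c' s t - poly_diff_quot d c s t"
  have "secant d q s t - secant d p s t = (?da, ?db, ?dc)"
    by (simp add: p q secant_def)
  then have "norm (secant d q s t - secant d p s t) \<le> norm ?da + norm (?db, ?dc)"
    by (simp only: norm_Pair_le)
  also have "\<dots> \<le> \<bar>?da\<bar> + (\<bar>?db\<bar> + \<bar>?dc\<bar>)"
    using norm_Pair_le[of ?db ?dc] by simp
  also have "\<dots> \<le> \<delta> * ?W + (\<delta> * ?W + \<delta> * ?W)"
    using assms(1) by (intro add_mono diff_le) (auto simp: p q)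
  finally show ?thesis by (simp add: mult_ac)
qed

lemma secant_nonzero_bounded:
  assumes "\<forall>s t. secant d p s t \<noteq> 0"
  obtains \<delta> where "0 < \<delta>"
    "\<And>q s t. q \<in> coeff_box d p \<delta> \<Longrightarrow> max \<bar>s\<bar> \<bar>t\<bar> \<le> R \<Longrightarrow> secant d q s t \<noteq> 0"
proof -
  define R' where "R' = max R 0"
  define K where "K = {-R'..R'} \<times> {-R'..R'}"
  have "compact K" "K \<noteq> {}"
    unfolding K_def R'_def by (auto intro: compact_Times)
  moreover have "continuous_on K (\<lambda>z. norm (secant d p (fst z) (snd z)))"
    by (cases p) (simp add: secant_def poly_diff_quot_def pow_diff_quot_def continuous_intros)
  ultimately have "\<exists>z0\<in>K. \<forall>z\<in>K. norm (secant d p (fst z0) (snd z0)) \<le> norm (secant d p (fst z) (snd z))"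
    by (rule continuous_attains_inf)
  then obtain z0 where
    min: "\<And>z. z \<in> K \<Longrightarrow> norm (secant d p (fst z0) (snd z0)) \<le> norm (secant d p (fst z) (snd z))"
    by blast
  define m where "m = norm (secant d p (fst z0) (snd z0))"
  have "0 < m" unfolding m_def using assms by simp
  define W where "W = (\<Sum>i\<le>d. of_nat i * R' ^ (i - 1))"
  have "0 \<le> W" unfolding W_def R'_def by (intro sum_nonneg) auto
  define \<delta> where "\<delta> = m / (3 * W + 1)"
  show ?thesis
  proof
    show "0 < \<delta>" unfolding \<delta>_def using \<open>0 < m\<close> \<open>0 \<le> W\<close> by simp
    fix q s t
    assume q: "q \<in> coeff_box d p \<delta>" and "max \<bar>s\<bar> \<bar>t\<bar> \<le> R"
    then have st: "max \<bar>s\<bar> \<bar>t\<bar> \<le> R'" by (auto simp: R'_def le_max_iff_disj)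
    then have "(s, t) \<in> K" unfolding K_def by (auto simp: abs_le_iff)
    then have "m \<le> norm (secant d p s t)"
      using min unfolding m_def by fastforce
    moreover have "norm (secant d q s t - secant d p s t) \<le> 3 * \<delta> * W"
      unfolding W_def using q st by (rule norm_secant_diff_le)
    moreover have "3 * \<delta> * W < m"
      unfolding \<delta>_def using \<open>0 < m\<close> \<open>0 \<le> W\<close> by (simp add: field_simps)
    ultimately show "secant d q s t \<noteq> 0" by auto
  qed
qed

lemma secant_nonzero_far:
  assumes "2 \<le> d" "p \<in> C_set d"
  obtains \<eta> R where "0 < \<eta>"
    "\<And>q s t. q \<in> A_set d \<Longrightarrow> q \<in> coeff_box d p \<eta> \<Longrightarrow> R < max \<bar>s\<bar> \<bar>t\<bar> \<Longrightarrow> secant d q s t \<noteq> 0"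
proof -
  obtain a b c where p: "p = (a, b, c)" by (cases p)
  have lead: "b (d - 1) \<noteq> 0" "c d \<noteq> 0" using assms(2) by (auto simp: p C_set_def)
  show ?thesis
  proof (cases "odd d")
    case True
    from poly_diff_quot_nonzero_far[of d d c, OF True order_refl lead(2)] obtain \<eta> R where "0 < \<eta>" and
      far: "\<And>e' s t. \<forall>i>d. e' i = 0 \<Longrightarrow> \<forall>i\<le>d. \<bar>e' i - c i\<bar> < \<eta> \<Longrightarrow> R < max \<bar>s\<bar> \<bar>t\<bar>
        \<Longrightarrow> poly_diff_quot d e' s t \<noteq> 0" by blast
    show ?thesis
    proof (rule that[OF \<open>0 < \<eta>\<close>])
      fix q s t
      assume "q \<in> A_set d" "q \<in> coeff_box d p \<eta>" "R < max \<bar>s\<bar> \<bar>t\<bar>"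
      moreover obtain a' b' c' where q: "q = (a', b', c')" by (cases q)
      ultimately have "poly_diff_quot d c' s t \<noteq> 0"
        by (intro far) (auto simp: p A_set_def)
      then show "secant d q s t \<noteq> 0" by (simp add: q secant_def zero_prod_def)
    qed
  next
    case False
    with assms(1) have "odd (d - 1)" by simp
    from poly_diff_quot_nonzero_far[of "d - 1" d b, OF this diff_le_self lead(1)] obtain \<eta> R where "0 < \<eta>" and
      far: "\<And>e' s t. \<forall>i>d - 1. e' i = 0 \<Longrightarrow> \<forall>i\<le>d - 1. \<bar>e' i - b i\<bar> < \<eta> \<Longrightarrow> R < max \<bar>s\<bar> \<bar>t\<bar>
        \<Longrightarrow> poly_diff_quot d e' s t \<noteq> 0"
      by blast
    show ?thesis
    proof (rule that[OF \<open>0 < \<eta>\<close>])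
      fix q s t
      assume "q \<in> A_set d" "q \<in> coeff_box d p \<eta>" "R < max \<bar>s\<bar> \<bar>t\<bar>"
      moreover obtain a' b' c' where q: "q = (a', b', c')" by (cases q)
      ultimately have "poly_diff_quot d b' s t \<noteq> 0"
        by (intro far) (auto simp: p A_set_def)
      then show "secant d q s t \<noteq> 0" by (simp add: q secant_def zero_prod_def)
    qed
  qed
qed

lemma C_set_nhd:
  assumes "p \<in> C_set d"
  obtains \<delta> where "0 < \<delta>" "A_set d \<inter> coeff_box d p \<delta> \<subseteq> C_set d"
proof -
  obtain a b c where p: "p = (a, b, c)" by (cases p)
  define \<delta> where "\<delta> = min \<bar>a (d - 2)\<bar> (min \<bar>b (d - 1)\<bar> \<bar>c d\<bar>)"
  show ?thesis
  proof
    show "0 < \<delta>" using assms by (auto simp: \<delta>_def p C_set_def)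
    show "A_set d \<inter> coeff_box d p \<delta> \<subseteq> C_set d"
    proof (clarify)
      fix a' b' c'
      assume "(a', b', c') \<in> A_set d" "(a', b', c') \<in> coeff_box d p \<delta>"
      then have close: "\<forall>i\<le>d. \<bar>a' i - a i\<bar> < \<delta> \<and> \<bar>b' i - b i\<bar> < \<delta> \<and> \<bar>c' i - c i\<bar> < \<delta>"
        by (simp add: p)
      have "\<bar>a' (d - 2) - a (d - 2)\<bar> < \<bar>a (d - 2)\<bar>" "\<bar>b' (d - 1) - b (d - 1)\<bar> < \<bar>b (d - 1)\<bar>"
        "\<bar>c' d - c d\<bar> < \<bar>c d\<bar>"
        using close[rule_format, of "d - 2"] close[rule_format, of "d - 1"] close[rule_format, of d]
        by (simp_all add: \<delta>_def)
      then have "a' (d - 2) \<noteq> 0" "b' (d - 1) \<noteq> 0" "c' d \<noteq> 0" by auto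
      with \<open>(a', b', c') \<in> A_set d\<close> show "(a', b', c') \<in> C_set d"
        by (simp add: C_set_def)
    qed
  qed
qed

lemma Q_set_nhd:
  assumes "2 \<le> d" "p \<in> Q_set d"
  obtains \<delta> where "0 < \<delta>" "A_set d \<inter> coeff_box d p \<delta> \<subseteq> Q_set d"
proof -
  have "p \<in> C_set d" and nonzero: "\<forall>s t. secant d p s t \<noteq> 0"
    using assms(2) by (auto simp: Q_set_def poly_knot_polymap_iff)
  obtain \<delta>\<^sub>C where "0 < \<delta>\<^sub>C" and C: "A_set d \<inter> coeff_box d p \<delta>\<^sub>C \<subseteq> C_set d"
    using C_set_nhd[OF \<open>p \<in> C_set d\<close>] .
  obtain \<eta> R where "0 < \<eta>" and far:
    "\<And>q s t. q \<in> A_set d \<Longrightarrow> q \<in> coeff_box d p \<eta> \<Longrightarrow> R < max \<bar>s\<bar> \<bar>t\<bar> \<Longrightarrow> secant d q s t \<noteq> 0"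
    using secant_nonzero_far[OF assms(1) \<open>p \<in> C_set d\<close>] by blast
  obtain \<delta>\<^sub>K where "0 < \<delta>\<^sub>K" and near:
    "\<And>q s t. q \<in> coeff_box d p \<delta>\<^sub>K \<Longrightarrow> max \<bar>s\<bar> \<bar>t\<bar> \<le> R \<Longrightarrow> secant d q s t \<noteq> 0"
    using secant_nonzero_bounded[OF nonzero, where R = R] by blast
  define \<delta> where "\<delta> = min \<delta>\<^sub>C (min \<eta> \<delta>\<^sub>K)"
  show ?thesis
  proof
    show "0 < \<delta>" using \<open>0 < \<delta>\<^sub>C\<close> \<open>0 < \<eta>\<close> \<open>0 < \<delta>\<^sub>K\<close> by (simp add: \<delta>_def)
    show "A_set d \<inter> coeff_box d p \<delta> \<subseteq> Q_set d"
    proof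
      fix q
      assume q: "q \<in> A_set d \<inter> coeff_box d p \<delta>"
      then have "q \<in> coeff_box d p \<delta>'" if "\<delta> \<le> \<delta>'" for \<delta>'
        using coeff_box_mono[OF that] by blast
      then have "q \<in> coeff_box d p \<delta>\<^sub>C" "q \<in> coeff_box d p \<eta>" "q \<in> coeff_box d p \<delta>\<^sub>K"
        by (simp_all add: \<delta>_def)
      have "secant d q s t \<noteq> 0" for s t
      proof (cases "R < max \<bar>s\<bar> \<bar>t\<bar>")
        case True
        with q \<open>q \<in> coeff_box d p \<eta>\<close> show ?thesis by (intro far) auto
      next
        case False
        with \<open>q \<in> coeff_box d p \<delta>\<^sub>K\<close> show ?thesis by (intro near) auto
      qed
      moreover have "q \<in> C_set d" using q C \<open>q \<in> coeff_box d p \<delta>\<^sub>C\<close> by blast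
      ultimately show "q \<in> Q_set d" by (simp add: Q_set_def poly_knot_polymap_iff)
    qed
  qed
qed

theorem mainTheorem11:
  fixes d :: nat
  assumes "d \<ge> 2"
  shows "openin (top_of_set (C_set d)) (Q_set d) \<and> openin (top_of_set (A_set d)) (Q_set d)"
proof -
  have "openin (top_of_set S) (Q_set d)" if "Q_set d \<subseteq> S" "S \<subseteq> A_set d" for S
  proof (subst openin_subopen, intro ballI)
    fix p
    assume "p \<in> Q_set d"
    then obtain \<delta> where "0 < \<delta>" "A_set d \<inter> coeff_box d p \<delta> \<subseteq> Q_set d"
      using Q_set_nhd[OF assms] by blast
    then show "\<exists>T. openin (top_of_set S) T \<and> p \<in> T \<and> T \<subseteq> Q_set d"
      using that \<open>p \<in> Q_set d\<close>
      by (intro exI[of _ "S \<inter> coeff_box d p \<delta>"])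
         (auto simp: openin_open_Int open_coeff_box center_mem_coeff_box)
  qed
  moreover have "Q_set d \<subseteq> C_set d" "C_set d \<subseteq> A_set d"
    by (auto simp: Q_set_def C_set_def)
  ultimately show ?thesis by blast
qed

end
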